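(* Let $(X,r)$ be a non-degenerate symmetric set (not necessarily finite) whose YB monoid $S(X,r)$ embeds in $G=G(X,r)$. The following are equivalent: (1) the associated left brace $(G,+,\cdot)$ is a two-sided brace; (2) the associated symmetric group $(G,r_G)$ is square-free (i.e. ${}^aa=a$ for all $a\in G$); (3) $(X,r)$ is square-free and ${}^{xy}(xy)=xy$ for all $x,y\in G$; (4) the group $G(X,r)$ is the free abelian group on $X$, so $(G,r_G)$ is the trivial solution; (5) $(X,r)$ is the trivial solution, i.e. $r(x,y)=(y,x)$ for all $x,y\in X$.
   Context: A symmetric set is a pair $(X,r)$, $X$ nonempty, $r(x,y)=({}^xy,x^y)$ a non-degenerate (all $y\mapsto{}^xy$, $y\mapsto y^x$ bijective), involutive bijection of $X\times X$ satisfying $r^{12}r^{23}r^{12}=r^{23}r^{12}r^{23}$ on $X^3$; square-free if $r(x,x)=(x,x)$ for all $x$. $S(X,r)$ (resp. $G(X,r)$) is the monoid (resp. group) generated by $X$ with relations $xy=zt$ whenever $r(x,y)=(z,t)\neq(x,y)$. A symmetric group is $(G,\sigma)$, $\sigma(u,v)=({}^uv,u^v)$ an involutive bijection of $G\times G$ with ${}^a1=1,{}^1u=u,1^u=1,a^1=a$, ${}^{ab}u={}^a({}^bu)$, $a^{uv}=(a^u)^v$, ${}^a(uv)=({}^au)({}^{a^u}v)$, $(ab)^u=(a^{{}^bu})(b^u)$, $uv=({}^uv)(u^v)$; $(G,r_G)$ is $G(X,r)$ with the unique such braiding restricting to $r$ on $X\times X$. Its left brace is $(G,+,\cdot)$ with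 $a+b:=a({}^{a^{-1}}b)$. A left brace $(B,+,\cdot)$ (abelian group $(B,+)$, group $(B,\cdot)$, $a(b+c)+a=ab+ac$) is two-sided if additionally $(a+b)c+c=ac+bc$ for all $a,b,c$. *)

theory Defs
  imports "HOL-Algebra.Free_Abelian_Groups"
begin

text \<open>X is the type 'a (nonempty by construction); r : X x X -> X x X,
  r(x,y) = (lact x y, ract x y) with lact x y = {}^x y and ract x y = x^y.\<close>

definition lact :: "('a \<times> 'a \<Rightarrow> 'a \<times> 'a) \<Rightarrow> 'a \<Rightarrow> 'a \<Rightarrow> 'a"
  where "lact r x y = fst (r (x, y))"

definition ract :: "('a \<times> 'a \<Rightarrow> 'a \<times> 'a) \<Rightarrow> 'a \<Rightarrow> 'a \<Rightarrow> 'a"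
  where "ract r x y = snd (r (x, y))"

definition r12 :: "('a \<times> 'a \<Rightarrow> 'a \<times> 'a) \<Rightarrow> 'a \<times> 'a \<times> 'a \<Rightarrow> 'a \<times> 'a \<times> 'a"
  where "r12 r t = (case t of (x, y, z) \<Rightarrow> (case r (x, y) of (u, v) \<Rightarrow> (u, v, z)))"

definition r23 :: "('a \<times> 'a \<Rightarrow> 'a \<times> 'a) \<Rightarrow> 'a \<times> 'a \<times> 'a \<Rightarrow> 'a \<times> 'a \<times> 'a"
  where "r23 r t = (case t of (x, y, z) \<Rightarrow> (case r (y, z) of (u, v) \<Rightarrow> (x, u, v)))"

definition symmetric_set :: "('a \<times> 'a \<Rightarrow> 'a \<times> 'a) \<Rightarrow> bool" where
  "symmetric_set r \<longleftrightarrow>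
     (\<forall>x. bij (lact r x)) \<and> (\<forall>x. bij (\<lambda>y. ract r y x)) \<and>
     (\<forall>p. r (r p) = p) \<and>
     (\<forall>t. r12 r (r23 r (r12 r t)) = r23 r (r12 r (r23 r t)))"

definition square_free :: "('a \<times> 'a \<Rightarrow> 'a \<times> 'a) \<Rightarrow> bool" where
  "square_free r \<longleftrightarrow> (\<forall>x. r (x, x) = (x, x))"

definition trivial_solution :: "('a \<times> 'a \<Rightarrow> 'a \<times> 'a) \<Rightarrow> bool" where
  "trivial_solution r \<longleftrightarrow> (\<forall>x y. r (x, y) = (y, x))"

text \<open>S(X,r): words over X modulo the congruence generated by xy = zt whenever
  r(x,y) = (z,t). (Including the trivial case r(x,y) = (x,y) changes nothing.)\<close>

definition S_step :: "('a \<times> 'a \<Rightarrow> 'a \<times> 'a) \<Rightarrow> ('a list \<times> 'a list) set" where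
  "S_step r = {(u @ [x, y] @ v, u @ [fst (r (x, y)), snd (r (x, y))] @ v) | u v x y. True}"

definition S_eq :: "('a \<times> 'a \<Rightarrow> 'a \<times> 'a) \<Rightarrow> ('a list \<times> 'a list) set" where
  "S_eq r = (S_step r \<union> (S_step r)\<inverse>)\<^sup>*"

text \<open>G(X,r): words in letters x^{+1} = (x,True), x^{-1} = (x,False), modulo the
  congruence generated by free cancellation and the relations xy = zt.\<close>

definition G_step :: "('a \<times> 'a \<Rightarrow> 'a \<times> 'a) \<Rightarrow> (('a \<times> bool) list \<times> ('a \<times> bool) list) set" where
  "G_step r =
     {(u @ [(x, b), (x, \<not> b)] @ v, u @ v) | u v x b. True} \<union>
     {(u @ [(x, True), (y, True)] @ v,
       u @ [(fst (r (x, y)), True), (snd (r (x, y)), True)] @ v) | u v x y. True}"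

definition G_eq :: "('a \<times> 'a \<Rightarrow> 'a \<times> 'a) \<Rightarrow> (('a \<times> bool) list \<times> ('a \<times> bool) list) set" where
  "G_eq r = (G_step r \<union> (G_step r)\<inverse>)\<^sup>*"

definition YB_group :: "('a \<times> 'a \<Rightarrow> 'a \<times> 'a) \<Rightarrow> (('a \<times> bool) list set) monoid" where
  "YB_group r =
     \<lparr> carrier = UNIV // G_eq r,
       monoid.mult = (\<lambda>A B. G_eq r `` {(SOME u. u \<in> A) @ (SOME v. v \<in> B)}),
       one = G_eq r `` {[]} \<rparr>"

definition gen :: "('a \<times> 'a \<Rightarrow> 'a \<times> 'a) \<Rightarrow> 'a \<Rightarrow> ('a \<times> bool) list set" where
  "gen r x = G_eq r `` {[(x, True)]}"

definition S_embeds_in_G :: "('a \<times> 'a \<Rightarrow> 'a \<times> 'a) \<Rightarrow> bool" where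
  "S_embeds_in_G r \<longleftrightarrow>
     (\<forall>u v. (map (\<lambda>x. (x, True)) u, map (\<lambda>x. (x, True)) v) \<in> G_eq r \<longrightarrow> (u, v) \<in> S_eq r)"

definition glact :: "('g \<times> 'g \<Rightarrow> 'g \<times> 'g) \<Rightarrow> 'g \<Rightarrow> 'g \<Rightarrow> 'g"
  where "glact \<sigma> a u = fst (\<sigma> (a, u))"

definition gract :: "('g \<times> 'g \<Rightarrow> 'g \<times> 'g) \<Rightarrow> 'g \<Rightarrow> 'g \<Rightarrow> 'g"
  where "gract \<sigma> a u = snd (\<sigma> (a, u))"

definition symmetric_group :: "('g, 'm) monoid_scheme \<Rightarrow> ('g \<times> 'g \<Rightarrow> 'g \<times> 'g) \<Rightarrow> bool" where
  "symmetric_group G \<sigma> \<longleftrightarrow> group G \<and>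
     (\<forall>p \<in> carrier G \<times> carrier G. \<sigma> p \<in> carrier G \<times> carrier G \<and> \<sigma> (\<sigma> p) = p) \<and>
     (\<forall>a \<in> carrier G. glact \<sigma> a \<one>\<^bsub>G\<^esub> = \<one>\<^bsub>G\<^esub> \<and> glact \<sigma> \<one>\<^bsub>G\<^esub> a = a \<and>
                      gract \<sigma> \<one>\<^bsub>G\<^esub> a = \<one>\<^bsub>G\<^esub> \<and> gract \<sigma> a \<one>\<^bsub>G\<^esub> = a) \<and>
     (\<forall>a \<in> carrier G. \<forall>b \<in> carrier G. \<forall>u \<in> carrier G.
        glact \<sigma> (a \<otimes>\<^bsub>G\<^esub> b) u = glact \<sigma> a (glact \<sigma> b u) \<and>
        gract \<sigma> u (a \<otimes>\<^bsub>G\<^esub> b) = gract \<sigma> (gract \<sigma> u a) b) \<and>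
     (\<forall>a \<in> carrier G. \<forall>u \<in> carrier G. \<forall>v \<in> carrier G.
        glact \<sigma> a (u \<otimes>\<^bsub>G\<^esub> v) = glact \<sigma> a u \<otimes>\<^bsub>G\<^esub> glact \<sigma> (gract \<sigma> a u) v) \<and>
     (\<forall>a \<in> carrier G. \<forall>b \<in> carrier G. \<forall>u \<in> carrier G.
        gract \<sigma> (a \<otimes>\<^bsub>G\<^esub> b) u = gract \<sigma> a (glact \<sigma> b u) \<otimes>\<^bsub>G\<^esub> gract \<sigma> b u) \<and>
     (\<forall>u \<in> carrier G. \<forall>v \<in> carrier G.
        u \<otimes>\<^bsub>G\<^esub> v = glact \<sigma> u v \<otimes>\<^bsub>G\<^esub> gract \<sigma> u v)"

definition brace_add :: "('g, 'm) monoid_scheme \<Rightarrow> ('g \<times> 'g \<Rightarrow> 'g \<times> 'g) \<Rightarrow> 'g \<Rightarrow> 'g \<Rightarrow> 'g" where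
  "brace_add G \<sigma> a b = a \<otimes>\<^bsub>G\<^esub> glact \<sigma> (inv\<^bsub>G\<^esub> a) b"

definition left_brace :: "('g, 'm) monoid_scheme \<Rightarrow> ('g \<Rightarrow> 'g \<Rightarrow> 'g) \<Rightarrow> bool" where
  "left_brace G add \<longleftrightarrow> group G \<and>
     (\<exists>z. comm_group \<lparr>carrier = carrier G, monoid.mult = add, one = z\<rparr>) \<and>
     (\<forall>a \<in> carrier G. \<forall>b \<in> carrier G. \<forall>c \<in> carrier G.
        add (a \<otimes>\<^bsub>G\<^esub> add b c) a = add (a \<otimes>\<^bsub>G\<^esub> b) (a \<otimes>\<^bsub>G\<^esub> c))"

definition two_sided_brace :: "('g, 'm) monoid_scheme \<Rightarrow> ('g \<Rightarrow> 'g \<Rightarrow> 'g) \<Rightarrow> bool" where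
  "two_sided_brace G add \<longleftrightarrow> left_brace G add \<and>
     (\<forall>a \<in> carrier G. \<forall>b \<in> carrier G. \<forall>c \<in> carrier G.
        add (add a b \<otimes>\<^bsub>G\<^esub> c) c = add (a \<otimes>\<^bsub>G\<^esub> c) (b \<otimes>\<^bsub>G\<^esub> c))"

end

theory Submission
  imports Defs
begin

text \<open>
  Every condition is equivalent to triviality of r. If r is trivial, the relations of G(X,r) are
  commutations, so G is free abelian on X; the left action of r_G fixes generators, hence
  everything, which makes r_G the flip and the brace the trivial one. Conversely, since S(X,r)
  embeds in G, an equality p q = x y of products of two generators in G forces (p, q) = (x, y)
  or (p, q) = r(x, y). Such an equality, from which {}^x y = y follows, is produced by
  condition (2) applied to a = x y, and by the two-sided law (a + b) c + c = a c + b c with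
  a = x a generator and b = -a: once to get square-freeness, and then, knowing -x = x^{-1},
  once more. An involutive r with trivial left action is trivial.
\<close>

section \<open>Words presenting the YB group\<close>

abbreviation G_class :: "('a \<times> 'a \<Rightarrow> 'a \<times> 'a) \<Rightarrow> ('a \<times> bool) list \<Rightarrow> ('a \<times> bool) list set"
  where "G_class r w \<equiv> G_eq r `` {w}"

lemma G_eq_equiv: "equiv UNIV (G_eq r)"
  unfolding equiv_def G_eq_def
  by (auto simp: refl_rtrancl sym_rtrancl sym_Un_converse trans_rtrancl)

lemma G_step_append_context: "(u, v) \<in> G_step r \<Longrightarrow> (p @ u @ q, p @ v @ q) \<in> G_step r"
proof (unfold G_step_def, elim UnE CollectE exE conjE, goal_cases)
  case (1 u' v' x b)
  then show ?case
    by (intro UnI1 CollectI exI[of _ "p @ u'"] exI[of _ "v' @ q"] exI[of _ x] exI[of _ b]) auto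
next
  case (2 u' v' x y)
  then show ?case
    by (intro UnI2 CollectI exI[of _ "p @ u'"] exI[of _ "v' @ q"] exI[of _ x] exI[of _ y]) auto
qed

lemma G_eq_append_context: "(u, v) \<in> G_eq r \<Longrightarrow> (p @ u @ q, p @ v @ q) \<in> G_eq r"
  unfolding G_eq_def
proof (induction rule: rtrancl_induct)
  case (step v w)
  then have "(p @ v @ q, p @ w @ q) \<in> G_step r \<union> (G_step r)\<inverse>"
    using G_step_append_context by blast
  with step.IH show ?case
    by (rule rtrancl.rtrancl_into_rtrancl)
qed simp

lemma G_eq_append: "(u, u') \<in> G_eq r \<Longrightarrow> (v, v') \<in> G_eq r \<Longrightarrow> (u @ v, u' @ v') \<in> G_eq r"
  using G_eq_append_context[of u u' r "[]" v] G_eq_append_context[of v v' r u' "[]"]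
    G_eq_equiv[of r]
  unfolding equiv_def trans_def by auto

lemma G_class_eq_iff: "G_class r u = G_class r v \<longleftrightarrow> (u, v) \<in> G_eq r"
  using eq_equiv_class_iff[OF G_eq_equiv] by blast

lemma YB_group_carrier: "carrier (YB_group r) = range (G_class r)"
  by (auto simp: YB_group_def quotient_def)

lemma YB_group_one: "\<one>\<^bsub>YB_group r\<^esub> = G_class r []"
  by (simp add: YB_group_def)

lemma YB_group_mult: "G_class r u \<otimes>\<^bsub>YB_group r\<^esub> G_class r v = G_class r (u @ v)"
proof -
  have "(w, SOME w'. w' \<in> G_class r w) \<in> G_eq r" for w
    using someI[of "\<lambda>w'. w' \<in> G_class r w" w] by (simp add: G_eq_def)
  then have "(u @ v, (SOME w. w \<in> G_class r u) @ (SOME w. w \<in> G_class r v)) \<in> G_eq r"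
    by (intro G_eq_append)
  from equiv_class_eq[OF G_eq_equiv this] show ?thesis
    by (simp add: YB_group_def)
qed

section \<open>Words of length one and two in the YB monoid\<close>

lemma S_step_length: "(u, v) \<in> S_step r \<Longrightarrow> length v = length u \<and> 2 \<le> length u"
  by (auto simp: S_step_def)

lemma S_eq_singleton: "([x], w) \<in> S_eq r \<Longrightarrow> w = [x]"
  unfolding S_eq_def
proof (induction rule: rtrancl_induct)
  case (step v w)
  then show ?case
    using S_step_length[of v w r] S_step_length[of w v r] by auto
qed simp

lemma S_step_pair:
  assumes "\<forall>p. r (r p) = p" and "([a, b], v) \<in> S_step r \<union> (S_step r)\<inverse>"
  shows "v = [fst (r (a, b)), snd (r (a, b))]"
  using assms by (auto simp: S_step_def Cons_eq_append_conv append_eq_Cons_conv)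

lemma S_eq_pair:
  assumes "\<forall>p. r (r p) = p" and "([x, y], w) \<in> S_eq r"
  shows "w = [x, y] \<or> w = [fst (r (x, y)), snd (r (x, y))]"
  using assms(2) unfolding S_eq_def
proof (induction rule: rtrancl_induct)
  case (step v w)
  from step.IH show ?case
  proof
    assume "v = [x, y]"
    then show ?thesis
      using S_step_pair[OF assms(1), of x y w] step.hyps(2) by simp
  next
    assume "v = [fst (r (x, y)), snd (r (x, y))]"
    then show ?thesis
      using S_step_pair[OF assms(1), of "fst (r (x, y))" "snd (r (x, y))" w] step.hyps(2) assms(1)
      by simp
  qed
qed simp

lemma gen_inj:
  assumes "S_embeds_in_G r"
  shows "inj (gen r)"
proof
  fix x y
  assume "gen r x = gen r y"
  then have "(map (\<lambda>x. (x, True)) [x], map (\<lambda>x. (x, True)) [y]) \<in> G_eq r"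
    by (simp add: gen_def G_class_eq_iff)
  then show "x = y"
    using assms S_eq_singleton unfolding S_embeds_in_G_def by fastforce
qed

lemma gen_mult_gen_eqD:
  assumes "S_embeds_in_G r" and "\<forall>p. r (r p) = p"
    and "gen r p \<otimes>\<^bsub>YB_group r\<^esub> gen r q = gen r x \<otimes>\<^bsub>YB_group r\<^esub> gen r y"
  shows "(p, q) = (x, y) \<or> (p, q) = r (x, y)"
proof -
  have "(map (\<lambda>x. (x, True)) [x, y], map (\<lambda>x. (x, True)) [p, q]) \<in> G_eq r"
    using assms(3) by (simp add: gen_def YB_group_mult G_class_eq_iff[symmetric])
  then have "([x, y], [p, q]) \<in> S_eq r"
    using assms(1) unfolding S_embeds_in_G_def by blast
  then show ?thesis
    using S_eq_pair[OF assms(2)] by (fastforce simp: prod_eq_iff)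
qed

section \<open>Symmetric groups\<close>

lemma (in comm_monoid) m_interchange:
  "\<lbrakk>x \<in> carrier G; y \<in> carrier G; z \<in> carrier G; w \<in> carrier G\<rbrakk>
    \<Longrightarrow> (x \<otimes> y) \<otimes> (z \<otimes> w) = (x \<otimes> z) \<otimes> (y \<otimes> w)"
  by (simp add: m_ac)

locale symmetric_braiding =
  fixes G :: "('g, 'm) monoid_scheme" (structure)
    and \<sigma> :: "'g \<times> 'g \<Rightarrow> 'g \<times> 'g"
  assumes symmetric_group: "symmetric_group G \<sigma>"
begin

sublocale group G
  using symmetric_group by (simp add: symmetric_group_def)

lemma braiding_eq: "\<sigma> (a, u) = (glact \<sigma> a u, gract \<sigma> a u)"
  by (simp add: glact_def gract_def)

lemma braiding_involutive: "a \<in> carrier G \<Longrightarrow> u \<in> carrier G \<Longrightarrow> \<sigma> (\<sigma> (a, u)) = (a, u)"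
  using symmetric_group unfolding symmetric_group_def by blast

lemma braiding_closed:
  "a \<in> carrier G \<Longrightarrow> u \<in> carrier G \<Longrightarrow> \<sigma> (a, u) \<in> carrier G \<times> carrier G"
  using symmetric_group unfolding symmetric_group_def by blast

lemma
  assumes "a \<in> carrier G" and "u \<in> carrier G"
  shows glact_closed [simp]: "glact \<sigma> a u \<in> carrier G"
    and gract_closed [simp]: "gract \<sigma> a u \<in> carrier G"
  using braiding_closed[OF assms] by (simp_all add: glact_def gract_def mem_Times_iff)

lemma
  assumes "a \<in> carrier G"
  shows glact_one_right [simp]: "glact \<sigma> a \<one> = \<one>"
    and glact_one_left [simp]: "glact \<sigma> \<one> a = a"
  using symmetric_group assms unfolding symmetric_group_def by blast+

lemma glact_mult:
  "\<lbrakk>a \<in> carrier G; b \<in> carrier G; u \<in> carrier G\<rbrakk>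
    \<Longrightarrow> glact \<sigma> (a \<otimes> b) u = glact \<sigma> a (glact \<sigma> b u)"
  using symmetric_group unfolding symmetric_group_def by blast

lemma glact_mult_right:
  "\<lbrakk>a \<in> carrier G; u \<in> carrier G; v \<in> carrier G\<rbrakk>
    \<Longrightarrow> glact \<sigma> a (u \<otimes> v) = glact \<sigma> a u \<otimes> glact \<sigma> (gract \<sigma> a u) v"
  using symmetric_group unfolding symmetric_group_def by blast

lemma mult_eq_glact_mult_gract:
  "u \<in> carrier G \<Longrightarrow> v \<in> carrier G \<Longrightarrow> u \<otimes> v = glact \<sigma> u v \<otimes> gract \<sigma> u v"
  using symmetric_group unfolding symmetric_group_def by blast

lemma glact_inv_glact [simp]:
  "a \<in> carrier G \<Longrightarrow> u \<in> carrier G \<Longrightarrow> glact \<sigma> (inv a) (glact \<sigma> a u) = u"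
  using glact_mult[of "inv a" a u] by simp

lemma glact_glact_inv [simp]:
  "a \<in> carrier G \<Longrightarrow> u \<in> carrier G \<Longrightarrow> glact \<sigma> a (glact \<sigma> (inv a) u) = u"
  using glact_mult[of a "inv a" u] by simp

lemma glact_inv_right:
  assumes "a \<in> carrier G" and "u \<in> carrier G"
  shows "glact \<sigma> a (inv u) = inv (glact \<sigma> (gract \<sigma> a (inv u)) u)"
proof -
  have "glact \<sigma> a (inv u) \<otimes> glact \<sigma> (gract \<sigma> a (inv u)) u = \<one>"
    using glact_mult_right[of a "inv u" u] assms by simp
  then show ?thesis
    using inv_equality assms by simp
qed

lemma glact_inv_self:
  assumes a: "a \<in> carrier G" and fixed: "glact \<sigma> a a = a"
  shows "glact \<sigma> (inv a) (inv a) = inv a"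
proof -
  have inv_fixes: "glact \<sigma> (inv a) a = a"
    using glact_inv_glact[OF a a] fixed by simp
  have "a \<otimes> inv a = a \<otimes> gract \<sigma> (inv a) a"
    using mult_eq_glact_mult_gract[of "inv a" a] a by (simp add: inv_fixes)
  then have gract_inv: "gract \<sigma> (inv a) a = inv a"
    using a by (metis Units_eq Units_l_cancel gract_closed inv_closed)
  have "a \<otimes> glact \<sigma> (inv a) (inv a) = \<one>"
    using glact_mult_right[of "inv a" a "inv a"] a by (simp add: inv_fixes gract_inv)
  then show ?thesis
    using inv_solve_left[of "glact \<sigma> (inv a) (inv a)" a \<one>] a by simp
qed

lemma braiding_eq_swap_if_glact_trivial:
  assumes trivial: "\<And>a u. a \<in> carrier G \<Longrightarrow> u \<in> carrier G \<Longrightarrow> glact \<sigma> a u = u"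
    and "a \<in> carrier G" and "u \<in> carrier G"
  shows "\<sigma> (a, u) = (u, a)"
proof -
  have "\<sigma> (u, gract \<sigma> a u) = (a, u)"
    using braiding_involutive[of a u] assms by (simp add: braiding_eq[of a u])
  then have "glact \<sigma> u (gract \<sigma> a u) = a"
    by (simp add: glact_def)
  then show ?thesis
    using assms by (simp add: braiding_eq)
qed

lemma comm_group_if_glact_trivial:
  assumes "\<And>a u. a \<in> carrier G \<Longrightarrow> u \<in> carrier G \<Longrightarrow> glact \<sigma> a u = u"
  shows "comm_group G"
proof (rule group_comm_groupI)
  fix u v
  assume "u \<in> carrier G" and "v \<in> carrier G"
  then show "u \<otimes> v = v \<otimes> u"
    using mult_eq_glact_mult_gract[of u v] braiding_eq_swap_if_glact_trivial[OF assms, of u v]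
    by (simp add: braiding_eq assms)
qed

lemma brace_add_one_left [simp]: "a \<in> carrier G \<Longrightarrow> brace_add G \<sigma> \<one> a = a"
  by (simp add: brace_add_def)

lemma brace_add_one_right [simp]: "a \<in> carrier G \<Longrightarrow> brace_add G \<sigma> a \<one> = a"
  by (simp add: brace_add_def)

lemma mult_eq_brace_add_glact:
  "a \<in> carrier G \<Longrightarrow> u \<in> carrier G \<Longrightarrow> a \<otimes> u = brace_add G \<sigma> a (glact \<sigma> a u)"
  by (simp add: brace_add_def)

lemma two_sided_brace_if_glact_trivial:
  assumes trivial: "\<And>a u. a \<in> carrier G \<Longrightarrow> u \<in> carrier G \<Longrightarrow> glact \<sigma> a u = u"
  shows "two_sided_brace G (brace_add G \<sigma>)"
proof -
  interpret comm_group G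
    by (rule comm_group_if_glact_trivial[OF trivial])
  have add_eq: "brace_add G \<sigma> a b = a \<otimes> b" if "a \<in> carrier G" "b \<in> carrier G" for a b
    using that trivial by (simp add: brace_add_def)
  have "comm_group \<lparr>carrier = carrier G, monoid.mult = brace_add G \<sigma>, one = \<one>\<rparr>"
  proof (rule comm_groupI, goal_cases)
    case (6 a)
    then show ?case
      by (intro bexI[of _ "inv a"]) (auto simp: add_eq)
  qed (auto simp: add_eq m_ac)
  then show ?thesis
    unfolding two_sided_brace_def left_brace_def
    by (auto simp: add_eq m_ac is_group)
qed

lemma two_sided_brace_add_self:
  assumes "two_sided_brace G (brace_add G \<sigma>)"
    and "a \<in> carrier G" "b \<in> carrier G" "c \<in> carrier G"
    and "brace_add G \<sigma> a b = \<one>"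
  shows "brace_add G \<sigma> c c = brace_add G \<sigma> (a \<otimes> c) (b \<otimes> c)"
proof -
  have "brace_add G \<sigma> (brace_add G \<sigma> a b \<otimes> c) c = brace_add G \<sigma> (a \<otimes> c) (b \<otimes> c)"
    using assms(1-4) unfolding two_sided_brace_def by blast
  then show ?thesis
    using assms(4,5) by simp
qed

end

section \<open>The YB group with its braiding\<close>

lemma trivial_solution_if_lact_trivial:
  assumes "\<forall>p. r (r p) = p" and "\<And>x y. lact r x y = y"
  shows "trivial_solution r"
  unfolding trivial_solution_def
proof (intro allI)
  fix x y
  have r_xy: "r (x, y) = (y, ract r x y)"
    using assms(2) by (simp add: lact_def ract_def prod_eq_iff)
  then have "r (y, ract r x y) = (x, y)"
    using assms(1) by metis
  then show "r (x, y) = (y, x)"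
    using r_xy assms(2)[of y "ract r x y"] by (simp add: lact_def)
qed

text \<open>For trivial r the relations of G(X,r) are commutations, so words can be evaluated in the
  free abelian group on X.\<close>

definition frag_of_word :: "('a \<times> bool) list \<Rightarrow> 'a \<Rightarrow>\<^sub>0 int" where
  "frag_of_word w = sum_list (map (\<lambda>(x, b). if b then frag_of x else - frag_of x) w)"

lemma frag_of_word_append [simp]: "frag_of_word (u @ v) = frag_of_word u + frag_of_word v"
  by (simp add: frag_of_word_def)

lemma frag_of_word_G_eq:
  assumes "trivial_solution r" and "(u, v) \<in> G_eq r"
  shows "frag_of_word u = frag_of_word v"
proof -
  have invariant: "frag_of_word u = frag_of_word v" if "(u, v) \<in> G_step r" for u v
    using that assms(1) unfolding G_step_def trivial_solution_def by (auto simp: frag_of_word_def)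
  from assms(2) show ?thesis
    unfolding G_eq_def
  proof (induction rule: rtrancl_induct)
    case (step v w)
    then show ?case
      using invariant[of v w] invariant[of w v] by auto
  qed simp
qed

locale YB_braiding =
  fixes r :: "'a \<times> 'a \<Rightarrow> 'a \<times> 'a"
    and \<sigma> :: "('a \<times> bool) list set \<times> ('a \<times> bool) list set \<Rightarrow> ('a \<times> bool) list set \<times> ('a \<times> bool) list set"
  assumes symmetric_set: "symmetric_set r"
    and S_embeds_in_G: "S_embeds_in_G r"
    and symmetric_group: "symmetric_group (YB_group r) \<sigma>"
    and braiding_gen: "\<And>x y. \<sigma> (gen r x, gen r y) = (gen r (fst (r (x, y))), gen r (snd (r (x, y))))"
begin

abbreviation (input) G where "G \<equiv> YB_group r"

sublocale symmetric_braiding G \<sigma>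
  by (rule symmetric_braiding.intro) (rule symmetric_group)

lemma r_involutive: "\<forall>p. r (r p) = p"
  using symmetric_set by (simp add: symmetric_set_def)

lemma lact_bij: "bij (lact r x)"
  using symmetric_set by (simp add: symmetric_set_def)

lemma lact_eq_iff [simp]: "lact r x u = lact r x v \<longleftrightarrow> u = v"
  using lact_bij[of x] by (simp add: bij_def inj_eq)

lemma gen_eq_iff [simp]: "gen r x = gen r y \<longleftrightarrow> x = y"
  using gen_inj[OF S_embeds_in_G] by (simp add: inj_eq)

lemma gen_closed [simp]: "gen r x \<in> carrier G"
  by (simp add: YB_group_carrier gen_def)

lemma inv_gen: "inv\<^bsub>G\<^esub> gen r x = G_class r [(x, False)]"
proof (rule inv_equality)
  have "([] @ [(x, False), (x, \<not> False)] @ [], []) \<in> G_step r"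
    unfolding G_step_def by blast
  then have "([(x, False)] @ [(x, True)], []) \<in> G_eq r"
    unfolding G_eq_def by auto
  then show "G_class r [(x, False)] \<otimes>\<^bsub>G\<^esub> gen r x = \<one>\<^bsub>G\<^esub>"
    by (simp add: gen_def YB_group_mult YB_group_one G_class_eq_iff)
qed (simp_all add: YB_group_carrier gen_def)

lemma YB_group_induct [consumes 1, case_names one gen inv_gen]:
  assumes "a \<in> carrier G" and "P \<one>\<^bsub>G\<^esub>"
    and "\<And>x a. a \<in> carrier G \<Longrightarrow> P a \<Longrightarrow> P (gen r x \<otimes>\<^bsub>G\<^esub> a)"
    and "\<And>x a. a \<in> carrier G \<Longrightarrow> P a \<Longrightarrow> P (inv\<^bsub>G\<^esub> gen r x \<otimes>\<^bsub>G\<^esub> a)"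
  shows "P a"
proof -
  have "P (G_class r w)" for w
  proof (induction w)
    case Nil
    then show ?case
      using assms(2) by (simp add: YB_group_one)
  next
    case (Cons l w)
    obtain x b where l: "l = (x, b)"
      by fastforce
    have w: "G_class r w \<in> carrier G"
      by (simp add: YB_group_carrier)
    have "G_class r (l # w) = G_class r [l] \<otimes>\<^bsub>G\<^esub> G_class r w"
      by (simp add: YB_group_mult)
    then show ?case
      using assms(3)[OF w Cons.IH] assms(4)[OF w Cons.IH] l
      by (cases b) (simp_all add: gen_def[symmetric] inv_gen[symmetric])
  qed
  then show ?thesis
    using assms(1) by (auto simp: YB_group_carrier)
qed

lemma glact_gen_gen [simp]: "glact \<sigma> (gen r y) (gen r x) = gen r (lact r y x)"
  by (simp add: braiding_gen glact_def lact_def)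

lemma glact_inv_gen_gen:
  "glact \<sigma> (inv\<^bsub>G\<^esub> gen r y) (gen r x) = gen r (inv_into UNIV (lact r y) x)"
proof -
  have "gen r x = glact \<sigma> (gen r y) (gen r (inv_into UNIV (lact r y) x))"
    using lact_bij by (simp add: bij_is_surj surj_f_inv_f)
  then show ?thesis
    by (metis glact_inv_glact gen_closed)
qed

lemma brace_add_gen_gen:
  "brace_add G \<sigma> (gen r y) (gen r x) = gen r y \<otimes>\<^bsub>G\<^esub> gen r (inv_into UNIV (lact r y) x)"
  by (simp add: brace_add_def glact_inv_gen_gen)

lemma glact_gen_in_range: "a \<in> carrier G \<Longrightarrow> glact \<sigma> a (gen r x) \<in> range (gen r)"
proof (induction arbitrary: x rule: YB_group_induct)
  case (gen y a)
  obtain z where "glact \<sigma> a (gen r x) = gen r z"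
    using gen.IH by blast
  then show ?case
    using gen.hyps by (simp add: glact_mult)
next
  case (inv_gen y a)
  obtain z where "glact \<sigma> a (gen r x) = gen r z"
    using inv_gen.IH by blast
  then show ?case
    using inv_gen.hyps by (simp add: glact_mult glact_inv_gen_gen)
qed simp

lemma glact_inv_gen_in_range:
  assumes "a \<in> carrier G"
  shows "glact \<sigma> a (inv\<^bsub>G\<^esub> gen r x) \<in> range (\<lambda>y. inv\<^bsub>G\<^esub> gen r y)"
proof -
  obtain y where "glact \<sigma> (gract \<sigma> a (inv\<^bsub>G\<^esub> gen r x)) (gen r x) = gen r y"
    using glact_gen_in_range assms by (metis gen_closed gract_closed inv_closed rangeE)
  then show ?thesis
    using glact_inv_right[OF assms gen_closed, of x] by auto
qed

lemma lact_trivial_if_glact_self_trivial: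
  assumes fixed: "\<forall>a \<in> carrier G. glact \<sigma> a a = a"
  shows "lact r y x = x"
proof -
  have self: "lact r z z = z" for z
    using fixed[rule_format, of "gen r z"] by simp
  define a where "a = gen r x \<otimes>\<^bsub>G\<^esub> gen r y"
  have a: "a \<in> carrier G"
    by (simp add: a_def)
  obtain q where q: "glact \<sigma> (gract \<sigma> a (gen r x)) (gen r y) = gen r q"
    using glact_gen_in_range[of "gract \<sigma> a (gen r x)" y] a by auto
  have "a = glact \<sigma> a (gen r x \<otimes>\<^bsub>G\<^esub> gen r y)"
    using fixed a by (simp add: a_def)
  also have "\<dots> = gen r (lact r x (lact r y x)) \<otimes>\<^bsub>G\<^esub> gen r q"
    using a by (simp add: glact_mult_right q) (simp add: a_def glact_mult)
  finally consider "(lact r x (lact r y x), q) = (x, y)" | "(lact r x (lact r y x), q) = r (x, y)"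
    using gen_mult_gen_eqD[OF S_embeds_in_G r_involutive] unfolding a_def by metis
  then show ?thesis
  proof cases
    case 1
    then show ?thesis
      using self[of x] by (metis lact_eq_iff prod.inject)
  next
    case 2
    then have "lact r x (lact r y x) = lact r x y"
      by (simp add: lact_def prod_eq_iff)
    then have "lact r y x = y"
      by simp
    then show ?thesis
      using self[of y] by (metis lact_eq_iff)
  qed
qed

lemma lact_self_if_two_sided_brace:
  assumes two_sided: "two_sided_brace G (brace_add G \<sigma>)"
  shows "lact r x x = x"
proof -
  txt \<open>The additive inverse of x is t^{-1}, so the two-sided law with c = t gives t + t = x t.\<close>
  obtain t where t: "glact \<sigma> (gen r x) (inv\<^bsub>G\<^esub> gen r x) = inv\<^bsub>G\<^esub> gen r t"
    using glact_inv_gen_in_range[of "gen r x" x] by auto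
  define t' where "t' = inv_into UNIV (lact r t) t"
  have lact_t': "lact r t t' = t"
    unfolding t'_def using lact_bij by (simp add: bij_is_surj surj_f_inv_f)
  have "brace_add G \<sigma> (gen r x) (inv\<^bsub>G\<^esub> gen r t) = \<one>\<^bsub>G\<^esub>"
    by (simp add: brace_add_def flip: t)
  then have "brace_add G \<sigma> (gen r t) (gen r t) = gen r x \<otimes>\<^bsub>G\<^esub> gen r t"
    using two_sided_brace_add_self[OF two_sided, of "gen r x" "inv\<^bsub>G\<^esub> gen r t" "gen r t"]
    by simp
  then have "gen r t \<otimes>\<^bsub>G\<^esub> gen r t' = gen r x \<otimes>\<^bsub>G\<^esub> gen r t"
    by (simp add: brace_add_gen_gen t'_def)
  then consider "(t, t') = (x, t)" | "(t, t') = r (x, t)"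
    using gen_mult_gen_eqD[OF S_embeds_in_G r_involutive] by blast
  then show ?thesis
  proof cases
    case 1
    then show ?thesis
      using lact_t' by simp
  next
    case 2
    then have "r (t, t') = (x, t)"
      using r_involutive by metis
    then have "x = t"
      using lact_t' by (simp add: lact_def)
    then show ?thesis
      using 2 by (simp add: lact_def prod_eq_iff)
  qed
qed

lemma lact_trivial_if_two_sided_brace:
  assumes two_sided: "two_sided_brace G (brace_add G \<sigma>)"
  shows "lact r x z = z"
proof -
  let ?add = "brace_add G \<sigma>" and ?g = "gen r x" and ?i = "inv\<^bsub>G\<^esub> gen r x"
  have self: "lact r y y = y" for y
    by (rule lact_self_if_two_sided_brace[OF two_sided])
  obtain zero where additive: "comm_group \<lparr>carrier = carrier G, monoid.mult = ?add, one = zero\<rparr>"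
    using two_sided unfolding two_sided_brace_def left_brace_def by blast
  txt \<open>By square-freeness x^{-1} is the additive inverse of x; the two-sided law with c = z
    then gives z z = z + z = {}^x z + {}^{x^{-1}} z, a product of two generators starting
    with {}^x z.\<close>
  have "glact \<sigma> ?i ?i = ?i"
    using glact_inv_self[of ?g] self[of x] by simp
  then have neg: "?add ?g ?i = \<one>\<^bsub>G\<^esub>"
    by (simp add: brace_add_def)
  define u where "u = lact r x z"
  obtain v where v: "glact \<sigma> ?i (gen r z) = gen r v"
    using glact_gen_in_range[of ?i z] by auto
  obtain w where w: "glact \<sigma> (inv\<^bsub>G\<^esub> gen r u) (gen r v) = gen r w"
    using glact_gen_in_range[of "inv\<^bsub>G\<^esub> gen r u" v] by auto
  have "inv_into UNIV (lact r z) z = z"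
    using inv_into_f_f[of "lact r z" UNIV z] lact_bij[of z] self[of z] by (simp add: bij_is_inj)
  then have "gen r z \<otimes>\<^bsub>G\<^esub> gen r z = ?add (gen r z) (gen r z)"
    by (simp add: brace_add_gen_gen)
  also have "\<dots> = ?add (?g \<otimes>\<^bsub>G\<^esub> gen r z) (?i \<otimes>\<^bsub>G\<^esub> gen r z)"
    using two_sided_brace_add_self[OF two_sided _ _ _ neg] by simp
  also have "\<dots> = ?add (?add ?g (gen r u)) (?add ?i (gen r v))"
    by (simp add: mult_eq_brace_add_glact u_def flip: v)
  also have "\<dots> = ?add (?add ?g ?i) (?add (gen r u) (gen r v))"
    using comm_monoid.m_interchange[OF comm_group.axioms(1)[OF additive]] by simp
  also have "\<dots> = gen r u \<otimes>\<^bsub>G\<^esub> gen r w"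
    by (simp add: neg) (simp add: brace_add_def w)
  finally have "(u, w) = (z, z) \<or> (u, w) = r (z, z)"
    using gen_mult_gen_eqD[OF S_embeds_in_G r_involutive] by metis
  then show ?thesis
    using self[of z] by (auto simp: u_def lact_def prod_eq_iff)
qed

lemma glact_trivial_if_trivial_solution:
  assumes trivial: "trivial_solution r" and "a \<in> carrier G" and "u \<in> carrier G"
  shows "glact \<sigma> a u = u"
proof -
  have lact: "lact r y x = x" for x y
    using trivial by (simp add: trivial_solution_def lact_def)
  have on_gen: "glact \<sigma> b (gen r x) = gen r x" if "b \<in> carrier G" for b x
    using that
  proof (induction rule: YB_group_induct)
    case (gen y b)
    then show ?case
      by (simp add: glact_mult lact)
  next
    case (inv_gen y b)
    then show ?case
      using glact_inv_glact[of "gen r y" "gen r x"] by (simp add: glact_mult lact)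
  qed simp
  have "\<forall>a \<in> carrier G. glact \<sigma> a u = u"
    using assms(3)
  proof (induction rule: YB_group_induct)
    case (gen y u)
    then show ?case
      by (simp add: glact_mult_right on_gen)
  next
    case (inv_gen y u)
    then show ?case
      by (simp add: glact_mult_right glact_inv_right on_gen)
  qed simp
  then show ?thesis
    using assms(2) by blast
qed

lemma trivial_solution_if_braiding_swap:
  assumes "\<forall>a \<in> carrier G. \<forall>b \<in> carrier G. \<sigma> (a, b) = (b, a)"
  shows "trivial_solution r"
  unfolding trivial_solution_def
proof (intro allI)
  fix x y
  have "(gen r y, gen r x) = (gen r (fst (r (x, y))), gen r (snd (r (x, y))))"
    using assms braiding_gen by (metis gen_closed)
  then show "r (x, y) = (y, x)"
    by (simp add: prod_eq_iff)
qed

lemma iso_free_Abelian_group_if_trivial_solution: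
  assumes trivial: "trivial_solution r"
  shows "\<exists>h. h \<in> iso G (free_Abelian_group UNIV) \<and> (\<forall>x. h (gen r x) = frag_of x)"
proof -
  let ?F = "free_Abelian_group (UNIV :: 'a set)"
  interpret abelian: comm_group G
    by (rule comm_group_if_glact_trivial) (rule glact_trivial_if_trivial_solution[OF trivial])
  define h :: "('a \<times> bool) list set \<Rightarrow> 'a \<Rightarrow>\<^sub>0 int"
    where "h A = frag_of_word (SOME w. w \<in> A)" for A
  have h_class: "h (G_class r w) = frag_of_word w" for w
  proof -
    have "(w, SOME w'. w' \<in> G_class r w) \<in> G_eq r"
      using someI[of "\<lambda>w'. w' \<in> G_class r w" w] by (simp add: G_eq_def)
    then show ?thesis
      unfolding h_def using frag_of_word_G_eq[OF trivial] by simp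
  qed
  have h_gen: "h (gen r x) = frag_of x" for x
    by (simp add: gen_def h_class frag_of_word_def)
  have h_hom: "h \<in> hom G ?F"
  proof (rule homI)
    fix a b
    assume "a \<in> carrier G" "b \<in> carrier G"
    then show "h (a \<otimes>\<^bsub>G\<^esub> b) = h a \<otimes>\<^bsub>?F\<^esub> h b"
      by (auto simp: YB_group_carrier YB_group_mult h_class)
  qed simp
  interpret h: group_hom G ?F h
    by (simp add: group_hom_def group_hom_axioms_def h_hom is_group)
  obtain k where k_hom: "k \<in> hom ?F G" and k_frag: "\<And>x. k (frag_of x) = gen r x"
    using abelian.free_Abelian_group_universal[of "gen r" UNIV] by (metis UNIV_I gen_closed image_subsetI)
  interpret k: group_hom ?F G k
    by (simp add: group_hom_def group_hom_axioms_def k_hom is_group)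
  have k_h: "k (h a) = a" if "a \<in> carrier G" for a
    using that
  proof (induction rule: YB_group_induct)
    case (gen x a)
    then show ?case
      using k.hom_mult[of "frag_of x" "h a"] by (simp add: h_gen k_frag)
  next
    case (inv_gen x a)
    have "k (- frag_of x) = inv\<^bsub>G\<^esub> gen r x"
      using k.hom_inv[of "frag_of x"] by (simp add: k_frag)
    then show ?case
      using inv_gen k.hom_mult[of "- frag_of x" "h a"] by (simp add: h_gen)
  qed (use k.hom_one in simp)
  have h_k: "h (k f) = f" for f
  proof (induction rule: free_Abelian_group_induct[of f UNIV])
    case 2
    then show ?case
      using k.hom_one h.hom_one by simp
  next
    case (3 f g)
    moreover have "f - g = f \<otimes>\<^bsub>?F\<^esub> inv\<^bsub>?F\<^esub> g"
      by simp
    ultimately show ?case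
      by (simp del: mult_free_Abelian_group inv_free_Abelian_group)
  qed (simp_all add: k_frag h_gen)
  have "bij_betw h (carrier G) (carrier ?F)"
    by (rule bij_betw_byWitness[where f'=k]) (auto simp: k_h h_k)
  then have "h \<in> iso G ?F"
    using h_hom by (simp add: iso_def)
  then show ?thesis
    using h_gen by blast
qed

end

theorem mainTheorem11:
  fixes r :: "'a \<times> 'a \<Rightarrow> 'a \<times> 'a"
    and \<sigma> :: "('a \<times> bool) list set \<times> ('a \<times> bool) list set \<Rightarrow> ('a \<times> bool) list set \<times> ('a \<times> bool) list set"
  assumes symm: "symmetric_set r"
    and emb: "S_embeds_in_G r"
    and rG: "symmetric_group (YB_group r) \<sigma>"
    and rG_ext: "\<forall>x y. \<sigma> (gen r x, gen r y) = (gen r (fst (r (x, y))), gen r (snd (r (x, y))))"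
  defines "G \<equiv> YB_group r"
  shows
    "(two_sided_brace G (brace_add G \<sigma>)
        \<longleftrightarrow> (\<forall>a \<in> carrier G. glact \<sigma> a a = a))
   \<and> ((\<forall>a \<in> carrier G. glact \<sigma> a a = a)
        \<longleftrightarrow> (square_free r \<and>
             (\<forall>x \<in> carrier G. \<forall>y \<in> carrier G.
                glact \<sigma> (x \<otimes>\<^bsub>G\<^esub> y) (x \<otimes>\<^bsub>G\<^esub> y) = x \<otimes>\<^bsub>G\<^esub> y)))
   \<and> ((square_free r \<and>
             (\<forall>x \<in> carrier G. \<forall>y \<in> carrier G.
                glact \<sigma> (x \<otimes>\<^bsub>G\<^esub> y) (x \<otimes>\<^bsub>G\<^esub> y) = x \<otimes>\<^bsub>G\<^esub> y))
        \<longleftrightarrow> ((\<exists>h. h \<in> iso G (free_Abelian_group (UNIV :: 'a set)) \<and>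
                   (\<forall>x. h (gen r x) = frag_of x)) \<and>
             (\<forall>a \<in> carrier G. \<forall>b \<in> carrier G. \<sigma> (a, b) = (b, a))))
   \<and> (((\<exists>h. h \<in> iso G (free_Abelian_group (UNIV :: 'a set)) \<and>
                   (\<forall>x. h (gen r x) = frag_of x)) \<and>
             (\<forall>a \<in> carrier G. \<forall>b \<in> carrier G. \<sigma> (a, b) = (b, a)))
        \<longleftrightarrow> trivial_solution r)"
proof -
  interpret YB_braiding r \<sigma>
    using symm emb rG rG_ext by unfold_locales blast+
  have glact_trivial: "glact \<sigma> a u = u" if "trivial_solution r" "a \<in> carrier G" "u \<in> carrier G" for a u
    using glact_trivial_if_trivial_solution that unfolding G_def by blast
  have "trivial_solution r \<longleftrightarrow> two_sided_brace G (brace_add G \<sigma>)"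
    unfolding G_def
    using trivial_solution_if_lact_trivial[OF r_involutive] lact_trivial_if_two_sided_brace
      two_sided_brace_if_glact_trivial glact_trivial_if_trivial_solution by blast
  moreover have "trivial_solution r \<longleftrightarrow> (\<forall>a \<in> carrier G. glact \<sigma> a a = a)"
    using trivial_solution_if_lact_trivial[OF r_involutive] lact_trivial_if_glact_self_trivial
      glact_trivial unfolding G_def by blast
  moreover have "(\<forall>a \<in> carrier G. glact \<sigma> a a = a) \<longleftrightarrow> (\<forall>x \<in> carrier G. \<forall>y \<in> carrier G.
                glact \<sigma> (x \<otimes>\<^bsub>G\<^esub> y) (x \<otimes>\<^bsub>G\<^esub> y) = x \<otimes>\<^bsub>G\<^esub> y)"
    unfolding G_def by (metis m_closed one_closed r_one)
  moreover have "trivial_solution r \<longrightarrow> square_free r"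
    by (simp add: trivial_solution_def square_free_def)
  moreover have "trivial_solution r \<longleftrightarrow> (\<exists>h. h \<in> iso G (free_Abelian_group UNIV) \<and>
                   (\<forall>x. h (gen r x) = frag_of x)) \<and> (\<forall>a \<in> carrier G. \<forall>b \<in> carrier G. \<sigma> (a, b) = (b, a))"
    using iso_free_Abelian_group_if_trivial_solution trivial_solution_if_braiding_swap
      braiding_eq_swap_if_glact_trivial glact_trivial unfolding G_def by blast
  ultimately show ?thesis
    by blast
qed

end
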